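(* Let $P=\mathbb{Q}[x_1,\dots,x_n]$ and let $\sigma$ be a term ordering on $\mathbb{T}^n$. Let $I$ be a non-zero ideal in $P$, and let $G_\sigma=\{g_1,\dots,g_r\}$ be its reduced $\sigma$-Gröbner basis, indexed so that $\mathrm{LT}_\sigma(g_1)<_\sigma\cdots<_\sigma \mathrm{LT}_\sigma(g_r)$. Let $\tilde G=\{\tilde g_1,\dots,\tilde g_s\}$ be a minimal strong $\sigma$-Gröbner basis of the ideal $J=\langle \operatorname{prim}(G_\sigma)\rangle\subseteq\mathbb{Z}[x_1,\dots,x_n]$. Then: (a) the elements of $\tilde G$ can be indexed so that $\mathrm{LT}_\sigma(\tilde g_i)=\mathrm{LT}_\sigma(g_i)$ for $i=1,\dots,r$, while for $i=r+1,\dots,s$ each $\mathrm{LT}_\sigma(\tilde g_i)$ is a proper multiple of $\mathrm{LT}_\sigma(g_k)$ for some $k\le r$; (b) with this indexing, the subset $\{\tilde g_1,\dots,\tilde g_r\}$ is a minimal $\sigma$-Gröbner basis of $I$ in $P$; (c) with this indexing, $\mathrm{LC}_\sigma(\tilde g_i)$ divides $\mathrm{LC}_\sigma(\operatorname{prim}(g_i))$ for $i=1,\dots,r$; (d) with this indexing, if for some $i\in\{1,\dots,r\}$ there is a prime $p$ such that $p\mid\operatorname{den}(g_i)$ but $p\nmid\operatorname{den}(g_j)$ for every $j=1,\dots,i-1$, then $p\mid \mathrm{LC}_\sigma(\tilde g_i)$.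
   Context: $\mathbb{T}^n$ is the monoid of power-products in $x_1,\dots,x_n$; $\mathrm{LT}_\sigma$, $\mathrm{LC}_\sigma$, $\mathrm{LM}_\sigma$ denote leading power-product (term), leading coefficient and leading monomial $\mathrm{LC}_\sigma(f)\cdot\mathrm{LT}_\sigma(f)$. For $f\in P$, $\operatorname{den}(f)$ is the positive least common multiple of the denominators of the coefficients of $f$. For non-zero $f\in P$, with $c$ the integer content of $f\cdot\operatorname{den}(f)\in\mathbb{Z}[x_1,\dots,x_n]$, the primitive integral part is $\operatorname{prim}(f)=c^{-1}f\cdot\operatorname{den}(f)$; for a set $F$, $\operatorname{prim}(F)=\{\operatorname{prim}(f):f\in F\}$. Non-zero polynomials $g_1,\dots,g_s\in\mathbb{Z}[x_1,\dots,x_n]$ form a strong $\sigma$-Gröbner basis of $J=\langle g_1,\dots,g_s\rangle$ if for each non-zero $f\in J$ some $\mathrm{LM}_\sigma(g_i)$ divides $\mathrm{LM}_\sigma(f)$ in $\mathbb{Z}[x_1,\dots,x_n]$; it is minimal if moreover $\mathrm{LM}_\sigma(g_i)\nmid\mathrm{LM}_\sigma(g_j)$ whenever $i\neq j$. *)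

theory Defs
  imports Complex_Main "HOL-Library.Poly_Mapping" "HOL-Computational_Algebra.Primes"
begin

text \<open>Power-products in the variables indexed by the finite type 'v are
  finitely supported exponent vectors (multiplication of power-products
  is addition of exponent vectors, 1 is 0).\<close>

type_synonym 'v pp = "'v \<Rightarrow>\<^sub>0 nat"
type_synonym ('v, 'a) mpoly = "'v pp \<Rightarrow>\<^sub>0 'a"

definition pp_dvd :: "'v pp \<Rightarrow> 'v pp \<Rightarrow> bool" where
  "pp_dvd s t \<longleftrightarrow> (\<exists>u. t = s + u)"

definition pp_proper_multiple :: "'v pp \<Rightarrow> 'v pp \<Rightarrow> bool" where
  "pp_proper_multiple t s \<longleftrightarrow> (\<exists>u. u \<noteq> 0 \<and> t = s + u)"

definition term_order :: "('v pp \<Rightarrow> 'v pp \<Rightarrow> bool) \<Rightarrow> bool" where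
  "term_order le \<longleftrightarrow>
     (\<forall>t. le t t) \<and>
     (\<forall>s t. le s t \<and> le t s \<longrightarrow> s = t) \<and>
     (\<forall>s t u. le s t \<and> le t u \<longrightarrow> le s u) \<and>
     (\<forall>s t. le s t \<or> le t s) \<and>
     (\<forall>t. le 0 t) \<and>
     (\<forall>s t u. le s t \<longrightarrow> le (s + u) (t + u))"

definition LT :: "('v pp \<Rightarrow> 'v pp \<Rightarrow> bool) \<Rightarrow> ('v, 'a::zero) mpoly \<Rightarrow> 'v pp" where
  "LT le f = (THE t. t \<in> Poly_Mapping.keys f \<and> (\<forall>s\<in>Poly_Mapping.keys f. le s t))"

definition LC :: "('v pp \<Rightarrow> 'v pp \<Rightarrow> bool) \<Rightarrow> ('v, 'a::zero) mpoly \<Rightarrow> 'a" where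
  "LC le f = Poly_Mapping.lookup f (LT le f)"

definition LM :: "('v pp \<Rightarrow> 'v pp \<Rightarrow> bool) \<Rightarrow> ('v, 'a::zero) mpoly \<Rightarrow> ('v, 'a) mpoly" where
  "LM le f = Poly_Mapping.single (LT le f) (LC le f)"

definition is_ideal :: "'a::comm_ring_1 set \<Rightarrow> bool" where
  "is_ideal I \<longleftrightarrow> 0 \<in> I \<and> (\<forall>a\<in>I. \<forall>b\<in>I. a + b \<in> I) \<and> (\<forall>a\<in>I. \<forall>c. c * a \<in> I)"

definition ideal_gen :: "'a::comm_ring_1 set \<Rightarrow> 'a set" where
  "ideal_gen F = {p. \<exists>S c. finite S \<and> S \<subseteq> F \<and> p = (\<Sum>f\<in>S. c f * f)}"

definition is_GB :: "('v pp \<Rightarrow> 'v pp \<Rightarrow> bool) \<Rightarrow> ('v, rat) mpoly set \<Rightarrow> ('v, rat) mpoly set \<Rightarrow> bool" where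
  "is_GB le G I \<longleftrightarrow> finite G \<and> 0 \<notin> G \<and> ideal_gen G = I \<and>
     (\<forall>f\<in>I. f \<noteq> 0 \<longrightarrow> (\<exists>g\<in>G. pp_dvd (LT le g) (LT le f)))"

definition is_minimal_GB :: "('v pp \<Rightarrow> 'v pp \<Rightarrow> bool) \<Rightarrow> ('v, rat) mpoly set \<Rightarrow> ('v, rat) mpoly set \<Rightarrow> bool" where
  "is_minimal_GB le G I \<longleftrightarrow> is_GB le G I \<and>
     (\<forall>g\<in>G. \<forall>h\<in>G. g \<noteq> h \<longrightarrow> \<not> pp_dvd (LT le g) (LT le h))"

definition is_reduced_GB :: "('v pp \<Rightarrow> 'v pp \<Rightarrow> bool) \<Rightarrow> ('v, rat) mpoly set \<Rightarrow> ('v, rat) mpoly set \<Rightarrow> bool" where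
  "is_reduced_GB le G I \<longleftrightarrow> is_minimal_GB le G I \<and>
     (\<forall>g\<in>G. LC le g = 1) \<and>
     (\<forall>g\<in>G. \<forall>t\<in>Poly_Mapping.keys g. t \<noteq> LT le g \<longrightarrow> (\<forall>h\<in>G. \<not> pp_dvd (LT le h) t))"

definition is_strong_GB :: "('v pp \<Rightarrow> 'v pp \<Rightarrow> bool) \<Rightarrow> ('v, int) mpoly set \<Rightarrow> ('v, int) mpoly set \<Rightarrow> bool" where
  "is_strong_GB le G J \<longleftrightarrow> finite G \<and> 0 \<notin> G \<and> ideal_gen G = J \<and>
     (\<forall>f\<in>J. f \<noteq> 0 \<longrightarrow> (\<exists>g\<in>G. LM le g dvd LM le f))"

definition is_minimal_strong_GB :: "('v pp \<Rightarrow> 'v pp \<Rightarrow> bool) \<Rightarrow> ('v, int) mpoly set \<Rightarrow> ('v, int) mpoly set \<Rightarrow> bool" where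
  "is_minimal_strong_GB le G J \<longleftrightarrow> is_strong_GB le G J \<and>
     (\<forall>g\<in>G. \<forall>h\<in>G. g \<noteq> h \<longrightarrow> \<not> LM le g dvd LM le h)"

definition den :: "('v, rat) mpoly \<Rightarrow> int" where
  "den f = Lcm ((\<lambda>t. snd (quotient_of (Poly_Mapping.lookup f t))) ` Poly_Mapping.keys f)"

definition prim :: "('v, rat) mpoly \<Rightarrow> ('v, int) mpoly" where
  "prim f = (let d = den f;
                 h = Poly_Mapping.map (\<lambda>q. fst (quotient_of (q * of_int d))) f;
                 c = Gcd ((\<lambda>t. Poly_Mapping.lookup h t) ` Poly_Mapping.keys h)
             in Poly_Mapping.map (\<lambda>a. a div c) h)"

definition to_rat_poly :: "('v, int) mpoly \<Rightarrow> ('v, rat) mpoly" where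
  "to_rat_poly f = Poly_Mapping.map rat_of_int f"

end

theory Submission
  imports Defs "HOL-Library.Ramsey"
begin

text \<open>
  Each prim(g_i) lies in J, so a strong basis element has leading monomial dividing that of
  prim(g_i); its image in Q[x] lies in I, and minimality of the reduced basis forces equal
  leading terms. A Bezout combination of two basis elements with the same leading term shows
  that this element is unique, which gives (a) and (c); (b) holds because a basis of I with the
  leading terms of a minimal Groebner basis is again one. For (d), if p does not divide
  c = LC(gt_i), dividing the tail of gt_i by the monic, p-integral g_1, ..., g_(i-1) produces
  a p-integral element of I that is irreducible apart from its leading term c LT(g_i); it must
  then equal c g_i, so g_i would be p-integral, contradicting p | den(g_i).
\<close>

lemma
  assumes "term_order le"
  shows term_order_refl: "le t t"
    and term_order_antisym: "le s t \<Longrightarrow> le t s \<Longrightarrow> s = t"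
    and term_order_trans: "le s t \<Longrightarrow> le t u \<Longrightarrow> le s u"
    and term_order_total: "le s t \<or> le t s"
    and term_order_zero_least: "le 0 t"
    and term_order_add_right_mono: "le s t \<Longrightarrow> le (s + u) (t + u)"
  using assms unfolding term_order_def by meson+

lemma term_order_add_left_mono: "term_order le \<Longrightarrow> le s t \<Longrightarrow> le (u + s) (u + t)"
  using term_order_add_right_mono[of le s t u] by (simp add: add.commute)

lemma term_order_pp_dvd: "term_order le \<Longrightarrow> pp_dvd s t \<Longrightarrow> le s t"
  unfolding pp_dvd_def using term_order_add_left_mono[of le 0 _ s] term_order_zero_least[of le]
  by force

lemma term_order_le_less_trans:
  assumes le: "term_order le" and "le s t" "le t u" "t \<noteq> u"
  shows "le s u \<and> s \<noteq> u"
  using assms term_order_trans[OF le] term_order_antisym[OF le] by metis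

lemma not_pp_dvd_below:
  assumes le: "term_order le" and "le t u" "le s t" "s \<noteq> t"
  shows "\<not> pp_dvd u s"
  using assms term_order_pp_dvd[OF le] term_order_trans[OF le] term_order_antisym[OF le] by metis

lemma pp_dvd_trans: "pp_dvd s t \<Longrightarrow> pp_dvd t u \<Longrightarrow> pp_dvd s u"
  unfolding pp_dvd_def by (metis add.assoc)

lemma pp_dvd_antisym:
  fixes le :: "'v pp \<Rightarrow> 'v pp \<Rightarrow> bool" and s t :: "'v pp"
  assumes "term_order le" "pp_dvd s t" "pp_dvd t s"
  shows "s = t"
  using term_order_antisym[OF assms(1) term_order_pp_dvd[OF assms(1,2)] term_order_pp_dvd[OF assms(1,3)]] .

lemma pp_dvd_iff_lookup_le: "pp_dvd s t \<longleftrightarrow> (\<forall>v. Poly_Mapping.lookup s v \<le> Poly_Mapping.lookup t v)"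
proof
  assume "\<forall>v. Poly_Mapping.lookup s v \<le> Poly_Mapping.lookup t v"
  then have "t = s + (t - s)"
    by (intro poly_mapping_eqI) (simp add: lookup_add lookup_minus)
  then show "pp_dvd s t"
    unfolding pp_dvd_def by blast
qed (auto simp: pp_dvd_def lookup_add)

text \<open>In place of Dickson's lemma: a transitive relation covered by finitely many well-founded
  relations is well-founded (a consequence of Ramsey's theorem), and s < t forces some exponent
  of s to be smaller than that of t, since t cannot divide s.\<close>
lemma wf_term_order_less:
  fixes le :: "('v::finite) pp \<Rightarrow> 'v pp \<Rightarrow> bool"
  assumes le: "term_order le"
  shows "wf {(s, t). le s t \<and> s \<noteq> t}"
proof (rule trans_disj_wf_implies_wf)
  show "trans {(s, t). le s t \<and> s \<noteq> t}"
    by (auto intro: transI dest: term_order_trans[OF le] term_order_antisym[OF le])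
  obtain vs :: "'v list" where vs: "set vs = UNIV"
    using finite_list[OF finite_UNIV] by blast
  define T :: "nat \<Rightarrow> ('v pp \<times> 'v pp) set"
    where "T i = inv_image {(x, y). x < y} (\<lambda>s. Poly_Mapping.lookup s (vs ! i))" for i
  have "{(s, t). le s t \<and> s \<noteq> t} \<subseteq> (\<Union>i<length vs. T i)"
  proof clarify
    fix s t assume st: "le s t" "s \<noteq> t"
    have "\<not> pp_dvd t s"
      using st term_order_antisym[OF le] term_order_pp_dvd[OF le] by blast
    then obtain v where "Poly_Mapping.lookup s v < Poly_Mapping.lookup t v"
      unfolding pp_dvd_iff_lookup_le by (auto simp: not_le)
    moreover obtain i where "i < length vs" "vs ! i = v"
      using vs by (metis UNIV_I in_set_conv_nth)
    ultimately show "(s, t) \<in> (\<Union>i<length vs. T i)"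
      unfolding T_def by auto
  qed
  moreover have "wf (T i)" for i
    unfolding T_def by (intro wf_inv_image wf_less)
  ultimately show "disj_wf {(s, t). le s t \<and> s \<noteq> t}"
    unfolding disj_wf by blast
qed

lemma term_order_finite_has_greatest:
  assumes le: "term_order le" and "finite A" "A \<noteq> {}"
  shows "\<exists>t\<in>A. \<forall>s\<in>A. le s t"
  using assms(2,3)
proof (induction A rule: finite_ne_induct)
  case (singleton x)
  then show ?case
    using term_order_refl[OF le] by simp
next
  case (insert x A)
  then obtain t where "t \<in> A" "\<forall>s\<in>A. le s t"
    by blast
  then show ?case
    using term_order_total[OF le, of x t] term_order_refl[OF le, of x]
      term_order_trans[OF le] by blast
qed

lemma LT_greatest:
  fixes f :: "('v, 'a::zero) mpoly"
  assumes le: "term_order le" and "f \<noteq> 0"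
  shows "LT le f \<in> Poly_Mapping.keys f \<and> (\<forall>s\<in>Poly_Mapping.keys f. le s (LT le f))"
proof -
  obtain t where t: "t \<in> Poly_Mapping.keys f" "\<forall>s\<in>Poly_Mapping.keys f. le s t"
    using term_order_finite_has_greatest[OF le finite_keys] \<open>f \<noteq> 0\<close> by auto
  have "LT le f = t"
    unfolding LT_def by (rule the_equality) (use t term_order_antisym[OF le] in blast)+
  with t show ?thesis
    by simp
qed

lemma LT_in_keys: "term_order le \<Longrightarrow> f \<noteq> 0 \<Longrightarrow> LT le f \<in> Poly_Mapping.keys f"
  using LT_greatest by blast

lemma le_LT: "term_order le \<Longrightarrow> s \<in> Poly_Mapping.keys f \<Longrightarrow> le s (LT le f)"
  using LT_greatest[of le f] by fastforce

lemma LT_eqI: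
  "term_order le \<Longrightarrow> t \<in> Poly_Mapping.keys f \<Longrightarrow> (\<And>s. s \<in> Poly_Mapping.keys f \<Longrightarrow> le s t)
    \<Longrightarrow> LT le f = t"
  using le_LT[of le t f] LT_in_keys[of le f] term_order_antisym[of le] by fastforce

lemma LC_nonzero: "term_order le \<Longrightarrow> f \<noteq> 0 \<Longrightarrow> LC le f \<noteq> 0"
  using LT_in_keys[of le f] by (simp add: LC_def in_keys_iff)

lemma lookup_single_mult:
  fixes q :: "('v, 'a::comm_semiring_1) mpoly"
  shows "Poly_Mapping.lookup (Poly_Mapping.single u c * q) (u + t) = c * Poly_Mapping.lookup q t"
  by (simp add: lookup_mult lookup_single when_mult)

lemma lookup_single_zero_mult:
  fixes q :: "('v, 'a::comm_semiring_1) mpoly"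
  shows "Poly_Mapping.lookup (Poly_Mapping.single 0 c * q) t = c * Poly_Mapping.lookup q t"
  using lookup_single_mult[of 0 c q t] by simp

lemma keys_single_mult:
  fixes q :: "('v, 'a::comm_semiring_1) mpoly"
  shows "Poly_Mapping.keys (Poly_Mapping.single u c * q) \<subseteq> (+) u ` Poly_Mapping.keys q"
  using keys_mult[of "Poly_Mapping.single u c" q] by (auto split: if_splits)

lemma keys_tail_below:
  fixes f :: "('v, 'a::comm_ring_1) mpoly"
  assumes le: "term_order le" and s: "s \<in> Poly_Mapping.keys (f - Poly_Mapping.single (LT le f) (LC le f))"
  shows "le s (LT le f) \<and> s \<noteq> LT le f"
proof -
  have "s \<noteq> LT le f" "s \<in> Poly_Mapping.keys f"
    using s by (auto simp: in_keys_iff lookup_minus lookup_single LC_def when_def split: if_splits)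
  then show ?thesis
    using le_LT[OF le] by blast
qed

lemma keys_reduction_below:
  fixes f q :: "('v, 'a::field) mpoly"
  assumes le: "term_order le" and "q \<noteq> 0" and LT_f: "LT le f = u + LT le q"
    and s: "s \<in> Poly_Mapping.keys (f - Poly_Mapping.single u (LC le f / LC le q) * q)"
  shows "le s (LT le f) \<and> s \<noteq> LT le f"
proof
  have "s \<in> Poly_Mapping.keys f \<union> Poly_Mapping.keys (Poly_Mapping.single u (LC le f / LC le q) * q)"
    using keys_diff s by (rule subsetD)
  then show "le s (LT le f)"
  proof
    assume "s \<in> Poly_Mapping.keys (Poly_Mapping.single u (LC le f / LC le q) * q)"
    then obtain t where "t \<in> Poly_Mapping.keys q" "s = u + t"
      using keys_single_mult by blast
    then show ?thesis
      unfolding LT_f by (simp add: le_LT[OF le] term_order_add_left_mono[OF le])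
  qed (rule le_LT[OF le])
  have "Poly_Mapping.lookup (f - Poly_Mapping.single u (LC le f / LC le q) * q) (LT le f) = 0"
    using LC_nonzero[OF le \<open>q \<noteq> 0\<close>] by (simp add: LT_f lookup_minus lookup_single_mult LC_def)
  then show "s \<noteq> LT le f"
    using s by (auto simp: in_keys_iff)
qed

lemma LM_dvd_iff:
  fixes f q :: "('v, 'a::comm_ring_1) mpoly"
  assumes le: "term_order le" and "f \<noteq> 0"
  shows "LM le q dvd LM le f \<longleftrightarrow> pp_dvd (LT le q) (LT le f) \<and> LC le q dvd LC le f"
proof
  assume "LM le q dvd LM le f"
  then obtain m where m: "LM le f = Poly_Mapping.single (LT le q) (LC le q) * m"
    unfolding LM_def by blast
  have "LT le f \<in> Poly_Mapping.keys (LM le f)"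
    using LC_nonzero[OF le \<open>f \<noteq> 0\<close>] by (simp add: LM_def)
  then have "LT le f \<in> (+) (LT le q) ` Poly_Mapping.keys m"
    using keys_single_mult[of "LT le q" "LC le q" m] unfolding m by blast
  then obtain t where t: "LT le f = LT le q + t"
    by blast
  have "LC le f = Poly_Mapping.lookup (LM le f) (LT le f)"
    by (simp add: LM_def)
  also have "\<dots> = LC le q * Poly_Mapping.lookup m t"
    by (simp add: m t lookup_single_mult)
  finally show "pp_dvd (LT le q) (LT le f) \<and> LC le q dvd LC le f"
    using t by (auto simp: pp_dvd_def)
next
  assume "pp_dvd (LT le q) (LT le f) \<and> LC le q dvd LC le f"
  then obtain t c where "LT le f = LT le q + t" "LC le f = LC le q * c"
    by (auto simp: pp_dvd_def)
  then have "LM le f = LM le q * Poly_Mapping.single t c"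
    by (simp add: LM_def mult_single)
  then show "LM le q dvd LM le f"
    by simp
qed

lemma is_ideal_add: "is_ideal K \<Longrightarrow> a \<in> K \<Longrightarrow> b \<in> K \<Longrightarrow> a + b \<in> K"
  unfolding is_ideal_def by blast

lemma is_ideal_mult: "is_ideal K \<Longrightarrow> a \<in> K \<Longrightarrow> c * a \<in> K"
  unfolding is_ideal_def by blast

lemma is_ideal_zero: "is_ideal K \<Longrightarrow> 0 \<in> K"
  unfolding is_ideal_def by blast

lemma is_ideal_diff: "is_ideal K \<Longrightarrow> a \<in> K \<Longrightarrow> b \<in> K \<Longrightarrow> a - b \<in> K"
  using is_ideal_add[of K a "(- 1) * b"] is_ideal_mult[of K b "- 1"] by simp

lemma in_ideal_gen: "f \<in> F \<Longrightarrow> f \<in> ideal_gen F"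
  unfolding ideal_gen_def by (intro CollectI exI[of _ "{f}"] exI[of _ "\<lambda>_. 1"]) simp

lemma is_ideal_ideal_gen: "is_ideal (ideal_gen F)"
  unfolding is_ideal_def
proof (intro conjI ballI allI)
  show "0 \<in> ideal_gen F"
    unfolding ideal_gen_def by (intro CollectI exI[of _ "{}"]) simp
next
  fix a b assume "a \<in> ideal_gen F" "b \<in> ideal_gen F"
  obtain S c where S: "finite S" "S \<subseteq> F" "a = (\<Sum>f\<in>S. c f * f)"
    using \<open>a \<in> ideal_gen F\<close> unfolding ideal_gen_def by blast
  obtain T d where T: "finite T" "T \<subseteq> F" "b = (\<Sum>f\<in>T. d f * f)"
    using \<open>b \<in> ideal_gen F\<close> unfolding ideal_gen_def by blast
  have "a = (\<Sum>f\<in>S \<union> T. (if f \<in> S then c f else 0) * f)"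
    unfolding S(3) using S(1) T(1) by (intro sum.mono_neutral_cong_left) auto
  moreover have "b = (\<Sum>f\<in>S \<union> T. (if f \<in> T then d f else 0) * f)"
    unfolding T(3) using S(1) T(1) by (intro sum.mono_neutral_cong_left) auto
  ultimately have "a + b = (\<Sum>f\<in>S \<union> T. ((if f \<in> S then c f else 0) + (if f \<in> T then d f else 0)) * f)"
    by (simp only: distrib_right sum.distrib)
  with S T show "a + b \<in> ideal_gen F"
    unfolding ideal_gen_def by (intro CollectI exI[of _ "S \<union> T"] exI conjI) auto
next
  fix a e assume "a \<in> ideal_gen F"
  then obtain S c where S: "finite S" "S \<subseteq> F" "a = (\<Sum>f\<in>S. c f * f)"
    unfolding ideal_gen_def by blast
  then have "e * a = (\<Sum>f\<in>S. (e * c f) * f)"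
    by (simp add: sum_distrib_left mult.assoc)
  with S show "e * a \<in> ideal_gen F"
    unfolding ideal_gen_def by (intro CollectI exI[of _ S] exI conjI)
qed

lemma ideal_gen_least:
  assumes K: "is_ideal K" and "F \<subseteq> K"
  shows "ideal_gen F \<subseteq> K"
proof
  fix a assume "a \<in> ideal_gen F"
  then obtain S c where S: "finite S" "S \<subseteq> F" "a = (\<Sum>f\<in>S. c f * f)"
    unfolding ideal_gen_def by blast
  have "(\<Sum>f\<in>S. c f * f) \<in> K"
    using S(1,2) \<open>F \<subseteq> K\<close>
  proof (induction S rule: finite_induct)
    case (insert f S)
    then show ?case
      by (auto intro: is_ideal_add[OF K] is_ideal_mult[OF K])
  qed (simp add: is_ideal_zero[OF K])
  with S show "a \<in> K"
    by simp
qed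

section \<open>Division\<close>

lemma LT_induct:
  fixes f :: "('v::finite, 'a::zero) mpoly"
  assumes le: "term_order le" and zero: "P 0"
    and step: "\<And>f. f \<noteq> 0 \<Longrightarrow>
      (\<And>h. \<forall>s\<in>Poly_Mapping.keys h. le s (LT le f) \<and> s \<noteq> LT le f \<Longrightarrow> P h) \<Longrightarrow> P f"
  shows "P f"
proof -
  have "\<forall>g :: ('v, 'a) mpoly. g \<noteq> 0 \<longrightarrow> LT le g = t \<longrightarrow> P g" for t
    using wf_term_order_less[OF le]
  proof (induction t rule: wf_induct_rule)
    case (less t)
    show ?case
    proof (intro allI impI)
      fix g :: "('v, 'a) mpoly" assume "g \<noteq> 0" "LT le g = t"
      show "P g"
      proof (rule step[OF \<open>g \<noteq> 0\<close>])
        fix h :: "('v, 'a) mpoly" assume below: "\<forall>s\<in>Poly_Mapping.keys h. le s (LT le g) \<and> s \<noteq> LT le g"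
        show "P h"
        proof (cases "h = 0")
          case False
          then have "(LT le h, t) \<in> {(s, t). le s t \<and> s \<noteq> t}"
            using below LT_in_keys[OF le False] \<open>LT le g = t\<close> by simp
          with less.IH False show ?thesis
            by blast
        qed (simp add: zero)
      qed
    qed
  qed
  then show ?thesis
    using zero by (cases "f = 0") auto
qed

lemma lookup_single_mult_in:
  fixes q :: "('v, 'a::comm_semiring_1) mpoly"
  assumes "0 \<in> Z" "\<And>x y. x \<in> Z \<Longrightarrow> y \<in> Z \<Longrightarrow> x * y \<in> Z"
    and "c \<in> Z" "\<And>t. Poly_Mapping.lookup q t \<in> Z"
  shows "Poly_Mapping.lookup (Poly_Mapping.single u c * q) t \<in> Z"
proof (cases "t \<in> Poly_Mapping.keys (Poly_Mapping.single u c * q)")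
  case True
  then obtain k where "t = u + k"
    using keys_single_mult by blast
  then show ?thesis
    using assms by (simp add: lookup_single_mult)
qed (simp add: in_keys_iff assms(1))

context
  fixes le :: "('v::finite) pp \<Rightarrow> 'v pp \<Rightarrow> bool" and Z :: "'a::field set" and F :: "('v, 'a) mpoly set"
  assumes le: "term_order le"
    and Z_zero: "0 \<in> Z"
    and Z_diff: "\<And>x y. x \<in> Z \<Longrightarrow> y \<in> Z \<Longrightarrow> x - y \<in> Z"
    and Z_mult: "\<And>x y. x \<in> Z \<Longrightarrow> y \<in> Z \<Longrightarrow> x * y \<in> Z"
    and F_nonzero: "0 \<notin> F"
    and F_coeffs: "\<And>q t. q \<in> F \<Longrightarrow> Poly_Mapping.lookup q t \<in> Z"
    and F_LC: "\<And>q. q \<in> F \<Longrightarrow> inverse (LC le q) \<in> Z"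
begin

lemma division_step:
  fixes f :: "('v, 'a) mpoly"
  assumes f_coeffs: "\<forall>t. Poly_Mapping.lookup f t \<in> Z" and "f \<noteq> 0"
  shows "\<exists>m r. m \<in> ideal_gen F \<and> (\<forall>t. Poly_Mapping.lookup r t \<in> Z) \<and>
    (\<forall>t. Poly_Mapping.lookup (f - m - r) t \<in> Z) \<and> Poly_Mapping.keys r \<subseteq> {LT le f} \<and>
    (\<forall>s\<in>Poly_Mapping.keys r. \<forall>q\<in>F. \<not> pp_dvd (LT le q) s) \<and>
    (\<forall>s\<in>Poly_Mapping.keys (f - m - r). le s (LT le f) \<and> s \<noteq> LT le f)"
proof (cases "\<exists>q\<in>F. pp_dvd (LT le q) (LT le f)")
  case True
  then obtain q u where q: "q \<in> F" "LT le f = LT le q + u"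
    unfolding pp_dvd_def by blast
  then have LT_f: "LT le f = u + LT le q"
    by (simp add: add.commute)
  define m where "m = Poly_Mapping.single u (LC le f / LC le q) * q"
  have "m \<in> ideal_gen F"
    unfolding m_def by (intro is_ideal_mult[OF is_ideal_ideal_gen] in_ideal_gen q(1))
  moreover have "LC le f \<in> Z"
    by (simp add: LC_def f_coeffs)
  then have "Poly_Mapping.lookup m t \<in> Z" for t
    unfolding m_def using q(1)
    by (intro lookup_single_mult_in) (auto simp: Z_zero Z_mult F_coeffs F_LC divide_inverse)
  then have "\<forall>t. Poly_Mapping.lookup (f - m - 0) t \<in> Z"
    by (simp add: lookup_minus Z_diff f_coeffs)
  moreover have "q \<noteq> 0"
    using q(1) F_nonzero by blast
  then have "\<forall>s\<in>Poly_Mapping.keys (f - m - 0). le s (LT le f) \<and> s \<noteq> LT le f"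
    unfolding m_def using keys_reduction_below[OF le _ LT_f] by simp
  ultimately show ?thesis
    by (intro exI[of _ m] exI[of _ 0]) (simp add: Z_zero)
next
  case False
  define r where "r = Poly_Mapping.single (LT le f) (LC le f)"
  have "LC le f \<in> Z"
    by (simp add: LC_def f_coeffs)
  then have "\<forall>t. Poly_Mapping.lookup r t \<in> Z" "\<forall>t. Poly_Mapping.lookup (f - 0 - r) t \<in> Z"
    by (simp_all add: r_def lookup_minus lookup_single when_def Z_diff Z_zero f_coeffs)
  moreover have "Poly_Mapping.keys r \<subseteq> {LT le f}"
    by (simp add: r_def)
  moreover from this have "\<forall>s\<in>Poly_Mapping.keys r. \<forall>q\<in>F. \<not> pp_dvd (LT le q) s"
    using False by blast
  moreover have "\<forall>s\<in>Poly_Mapping.keys (f - 0 - r). le s (LT le f) \<and> s \<noteq> LT le f"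
    unfolding r_def using keys_tail_below[OF le, where f=f] by simp
  moreover have "0 \<in> ideal_gen F"
    by (rule is_ideal_zero[OF is_ideal_ideal_gen])
  ultimately show ?thesis
    by blast
qed

lemma division_with_coefficients_in:
  fixes f :: "('v, 'a) mpoly"
  assumes f_coeffs: "\<forall>t. Poly_Mapping.lookup f t \<in> Z"
  shows "\<exists>\<rho>. f - \<rho> \<in> ideal_gen F \<and> (\<forall>t. Poly_Mapping.lookup \<rho> t \<in> Z) \<and>
    (\<forall>s\<in>Poly_Mapping.keys \<rho>. (\<exists>t\<in>Poly_Mapping.keys f. le s t) \<and> (\<forall>q\<in>F. \<not> pp_dvd (LT le q) s))"
  using f_coeffs
proof (induction f rule: LT_induct[OF le, case_names zero step])
  case zero
  show ?case
    by (intro exI[of _ 0]) (simp add: Z_zero is_ideal_zero[OF is_ideal_ideal_gen])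
next
  case (step f)
  obtain m r where m: "m \<in> ideal_gen F" and r: "\<forall>t. Poly_Mapping.lookup r t \<in> Z"
    "Poly_Mapping.keys r \<subseteq> {LT le f}" "\<forall>s\<in>Poly_Mapping.keys r. \<forall>q\<in>F. \<not> pp_dvd (LT le q) s"
    and rest_coeffs: "\<forall>t. Poly_Mapping.lookup (f - m - r) t \<in> Z"
    and rest_below: "\<forall>s\<in>Poly_Mapping.keys (f - m - r). le s (LT le f) \<and> s \<noteq> LT le f"
    using division_step[OF step.prems step.hyps] by blast
  obtain \<rho> where \<rho>: "f - m - r - \<rho> \<in> ideal_gen F" "\<forall>t. Poly_Mapping.lookup \<rho> t \<in> Z"
    "\<forall>s\<in>Poly_Mapping.keys \<rho>. (\<exists>t\<in>Poly_Mapping.keys (f - m - r). le s t) \<and> (\<forall>q\<in>F. \<not> pp_dvd (LT le q) s)"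
    using step.IH[OF rest_below rest_coeffs] by blast
  have "f - (r + \<rho>) = (f - m - r - \<rho>) + m"
    by (simp add: algebra_simps)
  also have "\<dots> \<in> ideal_gen F"
    by (rule is_ideal_add[OF is_ideal_ideal_gen \<rho>(1) m])
  finally have "f - (r + \<rho>) \<in> ideal_gen F" .
  moreover have "\<forall>t. Poly_Mapping.lookup (r + \<rho>) t \<in> Z"
    using r(1) \<rho>(2) Z_diff[OF _ Z_diff[OF Z_zero]] by (simp add: lookup_add)
  moreover have "(\<exists>t\<in>Poly_Mapping.keys f. le s t) \<and> (\<forall>q\<in>F. \<not> pp_dvd (LT le q) s)"
    if "s \<in> Poly_Mapping.keys (r + \<rho>)" for s
  proof -
    have LT_f: "LT le f \<in> Poly_Mapping.keys f"
      by (rule LT_in_keys[OF le step.hyps])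
    have "s \<in> Poly_Mapping.keys r \<or> s \<in> Poly_Mapping.keys \<rho>"
      using keys_add[of r \<rho>] that by blast
    then show ?thesis
    proof
      assume "s \<in> Poly_Mapping.keys r"
      then show ?thesis
        using r(2,3) LT_f term_order_refl[OF le] by blast
    next
      assume s_\<rho>: "s \<in> Poly_Mapping.keys \<rho>"
      have s: "(\<exists>t\<in>Poly_Mapping.keys (f - m - r). le s t) \<and> (\<forall>q\<in>F. \<not> pp_dvd (LT le q) s)"
        using \<rho>(3) s_\<rho> by (rule bspec)
      then obtain t where "t \<in> Poly_Mapping.keys (f - m - r)" "le s t"
        by blast
      then have "le s (LT le f)"
        using rest_below term_order_trans[OF le] by blast
      with s LT_f show ?thesis
        by blast
    qed
  qed
  ultimately show ?case
    by blast
qed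

end

lemma
  assumes "is_GB le G I"
  shows is_GB_ideal_gen: "ideal_gen G = I"
    and is_GB_zero_notin: "0 \<notin> G"
    and is_GB_LT_dvd: "f \<in> I \<Longrightarrow> f \<noteq> 0 \<Longrightarrow> \<exists>g\<in>G. pp_dvd (LT le g) (LT le f)"
  using assms unfolding is_GB_def by simp_all

lemma is_GB_ideal: "is_GB le G I \<Longrightarrow> is_ideal I"
  using is_ideal_ideal_gen[of G] by (simp add: is_GB_ideal_gen)

lemma is_GB_subset: "is_GB le G I \<Longrightarrow> G \<subseteq> I"
  using in_ideal_gen[of _ G] by (auto simp: is_GB_ideal_gen)

lemma
  assumes "is_minimal_GB le G I"
  shows is_minimal_GB_GB: "is_GB le G I"
    and is_minimal_GB_not_dvd: "g \<in> G \<Longrightarrow> h \<in> G \<Longrightarrow> g \<noteq> h \<Longrightarrow> \<not> pp_dvd (LT le g) (LT le h)"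
  using assms unfolding is_minimal_GB_def by simp_all

lemma
  assumes "is_reduced_GB le G I"
  shows is_reduced_GB_minimal: "is_minimal_GB le G I"
    and is_reduced_GB_LC: "g \<in> G \<Longrightarrow> LC le g = 1"
    and is_reduced_GB_tail: "g \<in> G \<Longrightarrow> t \<in> Poly_Mapping.keys g \<Longrightarrow> t \<noteq> LT le g \<Longrightarrow> h \<in> G
      \<Longrightarrow> \<not> pp_dvd (LT le h) t"
  using assms unfolding is_reduced_GB_def by simp_all

lemma
  assumes "is_minimal_strong_GB le G J"
  shows is_minimal_strong_GB_ideal_gen: "ideal_gen G = J"
    and is_minimal_strong_GB_zero_notin: "0 \<notin> G"
    and is_minimal_strong_GB_finite: "finite G"
    and is_minimal_strong_GB_LM_dvd: "f \<in> J \<Longrightarrow> f \<noteq> 0 \<Longrightarrow> \<exists>g\<in>G. LM le g dvd LM le f"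
    and is_minimal_strong_GB_not_dvd: "g \<in> G \<Longrightarrow> h \<in> G \<Longrightarrow> LM le g dvd LM le h \<Longrightarrow> g = h"
  using assms unfolding is_minimal_strong_GB_def is_strong_GB_def by auto

lemma GB_irreducible_eq_zero:
  assumes le: "term_order le" and G: "is_GB le G I" and "f \<in> I"
    and irreducible: "\<forall>s\<in>Poly_Mapping.keys f. \<forall>g\<in>G. \<not> pp_dvd (LT le g) s"
  shows "f = 0"
proof (rule ccontr)
  assume "f \<noteq> 0"
  then obtain g where "g \<in> G" "pp_dvd (LT le g) (LT le f)"
    using is_GB_LT_dvd[OF G \<open>f \<in> I\<close>] by blast
  then show False
    using irreducible LT_in_keys[OF le \<open>f \<noteq> 0\<close>] by blast
qed

lemma minimal_GB_LT_dvd_imp_eq: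
  assumes le: "term_order le" and G: "is_minimal_GB le G I" and "g \<in> G"
    and "f \<in> I" "f \<noteq> 0" and dvd: "pp_dvd (LT le f) (LT le g)"
  shows "LT le f = LT le g"
proof -
  obtain g' where "g' \<in> G" "pp_dvd (LT le g') (LT le f)"
    using is_GB_LT_dvd[OF is_minimal_GB_GB[OF G] \<open>f \<in> I\<close> \<open>f \<noteq> 0\<close>] by blast
  moreover from this have "g' = g"
    using is_minimal_GB_not_dvd[OF G _ \<open>g \<in> G\<close>] pp_dvd_trans[OF _ dvd] by blast
  ultimately show ?thesis
    using pp_dvd_antisym[OF le dvd] by blast
qed

text \<open>Dividing an element of I by G' leaves a remainder in I none of whose terms is divisible
  by a leading term of G, so the remainder vanishes.\<close>
lemma ideal_gen_eq_if_leading_terms_of_GB: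
  fixes G G' :: "('v::finite, rat) mpoly set"
  assumes le: "term_order le" and GB: "is_GB le G I"
    and "G' \<subseteq> I" "0 \<notin> G'" and LTs: "LT le ` G \<subseteq> LT le ` G'"
  shows "ideal_gen G' = I"
proof
  show "ideal_gen G' \<subseteq> I"
    by (rule ideal_gen_least[OF is_GB_ideal[OF GB] \<open>G' \<subseteq> I\<close>])
  show "I \<subseteq> ideal_gen G'"
  proof
    fix f assume "f \<in> I"
    obtain \<rho> where \<rho>: "f - \<rho> \<in> ideal_gen G'"
      "\<forall>s\<in>Poly_Mapping.keys \<rho>. \<forall>g\<in>G'. \<not> pp_dvd (LT le g) s"
      using division_with_coefficients_in[OF le _ _ _ \<open>0 \<notin> G'\<close>, where Z=UNIV and f=f] by simp blast
    have "\<rho> = f - (f - \<rho>)"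
      by simp
    also have "\<dots> \<in> I"
      using is_ideal_diff[OF is_GB_ideal[OF GB] \<open>f \<in> I\<close>] \<rho>(1)
        ideal_gen_least[OF is_GB_ideal[OF GB] \<open>G' \<subseteq> I\<close>] by blast
    finally have "\<rho> \<in> I" .
    moreover have "\<forall>s\<in>Poly_Mapping.keys \<rho>. \<forall>g\<in>G. \<not> pp_dvd (LT le g) s"
    proof (intro ballI)
      fix s g assume "s \<in> Poly_Mapping.keys \<rho>" "g \<in> G"
      moreover have "LT le g \<in> LT le ` G'"
        using LTs \<open>g \<in> G\<close> by blast
      ultimately show "\<not> pp_dvd (LT le g) s"
        using \<rho>(2) by auto
    qed
    ultimately have "\<rho> = 0"
      by (rule GB_irreducible_eq_zero[OF le GB])
    then show "f \<in> ideal_gen G'"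
      using \<rho>(1) by simp
  qed
qed

lemma minimal_GB_same_leading_terms:
  fixes G G' :: "('v::finite, rat) mpoly set"
  assumes le: "term_order le" and G: "is_minimal_GB le G I"
    and "G' \<subseteq> I" "finite G'" "0 \<notin> G'"
    and LTs: "LT le ` G' = LT le ` G" and inj: "inj_on (LT le) G'"
  shows "is_minimal_GB le G' I"
proof -
  have GB: "is_GB le G I"
    by (rule is_minimal_GB_GB[OF G])
  have "\<exists>g'\<in>G'. pp_dvd (LT le g') (LT le f)" if f: "f \<in> I" "f \<noteq> 0" for f
  proof -
    obtain g where "g \<in> G" "pp_dvd (LT le g) (LT le f)"
      using is_GB_LT_dvd[OF GB f] by blast
    moreover have "LT le g \<in> LT le ` G'"
      using LTs \<open>g \<in> G\<close> by simp
    ultimately show ?thesis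
      by (metis imageE)
  qed
  moreover have "\<not> pp_dvd (LT le g) (LT le h)" if gh: "g \<in> G'" "h \<in> G'" "g \<noteq> h" for g h
  proof -
    have "LT le g \<in> LT le ` G" "LT le h \<in> LT le ` G"
      using gh(1,2) by (simp_all flip: LTs)
    then obtain a b where ab: "a \<in> G" "b \<in> G" "LT le g = LT le a" "LT le h = LT le b"
      by (meson imageE)
    moreover have "LT le g \<noteq> LT le h"
      using inj gh unfolding inj_on_def by blast
    ultimately show ?thesis
      using is_minimal_GB_not_dvd[OF G ab(1,2)] by auto
  qed
  moreover have "ideal_gen G' = I"
    using ideal_gen_eq_if_leading_terms_of_GB[OF le GB \<open>G' \<subseteq> I\<close> \<open>0 \<notin> G'\<close>] LTs by simp
  ultimately show ?thesis
    using \<open>finite G'\<close> \<open>0 \<notin> G'\<close> unfolding is_minimal_GB_def is_GB_def by auto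
qed

lemma reduced_GB_irreducible_imp_multiple:
  fixes f :: "('v::finite, rat) mpoly"
  assumes le: "term_order le" and G: "is_reduced_GB le G I" and "g \<in> G" "f \<in> I"
    and irreducible: "\<forall>s\<in>Poly_Mapping.keys f. s \<noteq> LT le g \<longrightarrow> (\<forall>h\<in>G. \<not> pp_dvd (LT le h) s)"
  shows "f = Poly_Mapping.single 0 (Poly_Mapping.lookup f (LT le g)) * g"
proof -
  define c where "c = Poly_Mapping.lookup f (LT le g)"
  define D where "D = f - Poly_Mapping.single 0 c * g"
  have GB: "is_GB le G I"
    by (rule is_minimal_GB_GB[OF is_reduced_GB_minimal[OF G]])
  have "D \<in> I"
    unfolding D_def using \<open>f \<in> I\<close> \<open>g \<in> G\<close> is_GB_subset[OF GB]
    by (intro is_ideal_diff[OF is_GB_ideal[OF GB]] is_ideal_mult[OF is_GB_ideal[OF GB]]) auto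
  moreover have "\<forall>s\<in>Poly_Mapping.keys D. \<forall>h\<in>G. \<not> pp_dvd (LT le h) s"
  proof (intro ballI)
    fix s h assume s: "s \<in> Poly_Mapping.keys D" and "h \<in> G"
    have "s \<noteq> LT le g"
      using s is_reduced_GB_LC[OF G \<open>g \<in> G\<close>]
      by (auto simp: D_def c_def in_keys_iff lookup_minus lookup_single_zero_mult LC_def)
    moreover have "s \<in> Poly_Mapping.keys f \<or> s \<in> Poly_Mapping.keys g"
      using s by (auto simp: D_def in_keys_iff lookup_minus lookup_single_zero_mult)
    ultimately show "\<not> pp_dvd (LT le h) s"
      using irreducible is_reduced_GB_tail[OF G \<open>g \<in> G\<close> _ _ \<open>h \<in> G\<close>] \<open>h \<in> G\<close> by blast
  qed
  ultimately have "D = 0"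
    by (rule GB_irreducible_eq_zero[OF le GB])
  then show ?thesis
    unfolding D_def c_def by simp
qed

lemma bezout_combination_LT_LC:
  fixes h1 h2 :: "('v, int) mpoly"
  assumes le: "term_order le" and "h1 \<noteq> 0" and same_LT: "LT le h1 = LT le h2"
  obtains x y where "LT le (Poly_Mapping.single 0 x * h1 + Poly_Mapping.single 0 y * h2) = LT le h1"
    and "LC le (Poly_Mapping.single 0 x * h1 + Poly_Mapping.single 0 y * h2) = gcd (LC le h1) (LC le h2)"
proof -
  obtain x y where xy: "x * LC le h1 + y * LC le h2 = gcd (LC le h1) (LC le h2)"
    using bezout_int by blast
  define F where "F = Poly_Mapping.single 0 x * h1 + Poly_Mapping.single 0 y * h2"
  have lookup_F: "Poly_Mapping.lookup F t = x * Poly_Mapping.lookup h1 t + y * Poly_Mapping.lookup h2 t" for t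
    by (simp add: F_def lookup_add lookup_single_zero_mult)
  have lookup_F_LT: "Poly_Mapping.lookup F (LT le h1) = gcd (LC le h1) (LC le h2)"
    using xy same_LT by (simp add: lookup_F LC_def)
  moreover have "gcd (LC le h1) (LC le h2) \<noteq> 0"
    using LC_nonzero[OF le \<open>h1 \<noteq> 0\<close>] by simp
  ultimately have "LT le h1 \<in> Poly_Mapping.keys F"
    by (simp add: in_keys_iff)
  moreover have "le s (LT le h1)" if "s \<in> Poly_Mapping.keys F" for s
    using that le_LT[OF le, of s h1] le_LT[OF le, of s h2] same_LT
    by (cases "Poly_Mapping.lookup h1 s = 0") (auto simp: in_keys_iff lookup_F)
  ultimately have "LT le F = LT le h1"
    by (rule LT_eqI[OF le])
  moreover from this have "LC le F = gcd (LC le h1) (LC le h2)"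
    using lookup_F_LT by (simp add: LC_def)
  ultimately show ?thesis
    using that unfolding F_def by blast
qed

lemma minimal_strong_GB_inj_on_LT:
  assumes le: "term_order le" and Gt: "is_minimal_strong_GB le Gt J"
  shows "inj_on (LT le) Gt"
proof
  fix h1 h2 assume h: "h1 \<in> Gt" "h2 \<in> Gt" and same_LT: "LT le h1 = LT le h2"
  have "h1 \<noteq> 0" "h2 \<noteq> 0"
    using is_minimal_strong_GB_zero_notin[OF Gt] h by auto
  obtain x y where LT_F: "LT le (Poly_Mapping.single 0 x * h1 + Poly_Mapping.single 0 y * h2) = LT le h1"
    and LC_F: "LC le (Poly_Mapping.single 0 x * h1 + Poly_Mapping.single 0 y * h2) = gcd (LC le h1) (LC le h2)"
    using bezout_combination_LT_LC[OF le \<open>h1 \<noteq> 0\<close> same_LT] by blast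
  define F where "F = Poly_Mapping.single 0 x * h1 + Poly_Mapping.single 0 y * h2"
  txt \<open>Some leading monomial of Gt divides that of F, hence those of both h1 and h2.\<close>
  have "F \<in> ideal_gen Gt"
    unfolding F_def using h
    by (intro is_ideal_add[OF is_ideal_ideal_gen] is_ideal_mult[OF is_ideal_ideal_gen] in_ideal_gen)
  then have "F \<in> J"
    by (simp add: is_minimal_strong_GB_ideal_gen[OF Gt])
  moreover have "F \<noteq> 0"
    using LC_F LC_nonzero[OF le \<open>h1 \<noteq> 0\<close>] unfolding F_def by (auto simp: LC_def)
  ultimately obtain h3 where "h3 \<in> Gt" "LM le h3 dvd LM le F"
    using is_minimal_strong_GB_LM_dvd[OF Gt] by blast
  then have h3: "h3 \<in> Gt" "pp_dvd (LT le h3) (LT le h1)" "LC le h3 dvd gcd (LC le h1) (LC le h2)"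
    using LM_dvd_iff[OF le \<open>F \<noteq> 0\<close>] LT_F LC_F unfolding F_def by auto
  have "LM le h3 dvd LM le h1"
    using h3(2) dvd_trans[OF h3(3) gcd_dvd1] LM_dvd_iff[OF le \<open>h1 \<noteq> 0\<close>] by blast
  moreover have "LM le h3 dvd LM le h2"
    using h3(2) dvd_trans[OF h3(3) gcd_dvd2] LM_dvd_iff[OF le \<open>h2 \<noteq> 0\<close>] same_LT by auto
  ultimately show "h1 = h2"
    using is_minimal_strong_GB_not_dvd[OF Gt h3(1)] h by metis
qed

lemma lookup_to_rat_poly [simp]:
  "Poly_Mapping.lookup (to_rat_poly f) t = rat_of_int (Poly_Mapping.lookup f t)"
  unfolding to_rat_poly_def by (simp add: map.rep_eq when_def)

lemma keys_to_rat_poly [simp]: "Poly_Mapping.keys (to_rat_poly f) = Poly_Mapping.keys f"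
  by (auto simp: in_keys_iff)

lemma to_rat_poly_eq_0_iff [simp]: "to_rat_poly f = 0 \<longleftrightarrow> f = 0"
  by (metis keys_eq_empty keys_to_rat_poly)

lemma to_rat_poly_zero [simp]: "to_rat_poly 0 = 0"
  by simp

lemma to_rat_poly_add: "to_rat_poly (f + g) = to_rat_poly f + to_rat_poly g"
  by (rule poly_mapping_eqI) (simp add: lookup_add)

lemma of_int_Sum_any: "of_int (Sum_any h) = Sum_any (\<lambda>x. (of_int (h x) :: 'a::ring_char_0))"
  unfolding Sum_any.expand_set by simp

lemma of_int_when: "of_int (a when P) = (of_int a when P)"
  by (cases P) simp_all

lemma to_rat_poly_mult: "to_rat_poly (f * g) = to_rat_poly f * to_rat_poly g"
  by (rule poly_mapping_eqI) (simp add: lookup_mult of_int_Sum_any of_int_when)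

lemma LT_to_rat_poly [simp]: "LT le (to_rat_poly f) = LT le f"
  unfolding LT_def by simp

lemma den_nonzero: "den f \<noteq> 0"
  unfolding den_def by (auto simp: Lcm_0_iff) (metis quotient_of_denom_pos' less_irrefl)

lemma lookup_times_den_integral: "\<exists>n. Poly_Mapping.lookup f t * rat_of_int (den f) = rat_of_int n"
proof (cases "t \<in> Poly_Mapping.keys f")
  case True
  obtain a b where ab: "quotient_of (Poly_Mapping.lookup f t) = (a, b)"
    by (cases "quotient_of (Poly_Mapping.lookup f t)")
  have "b \<in> (\<lambda>t. snd (quotient_of (Poly_Mapping.lookup f t))) ` Poly_Mapping.keys f"
    using True ab by force
  then have "b dvd den f"
    unfolding den_def by (rule dvd_Lcm)
  then obtain m where "den f = b * m"
    by blast
  then have "Poly_Mapping.lookup f t * rat_of_int (den f) = rat_of_int (a * m)"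
    using quotient_of_div[OF ab] quotient_of_denom_pos[OF ab] by simp
  then show ?thesis
    by blast
qed (auto simp: in_keys_iff)

lemma to_rat_poly_prim:
  assumes "f \<noteq> 0"
  shows "\<exists>a. a \<noteq> 0 \<and> to_rat_poly (prim f) = Poly_Mapping.single 0 a * f"
proof -
  define h where "h = Poly_Mapping.map (\<lambda>q. fst (quotient_of (q * rat_of_int (den f)))) f"
  define c where "c = Gcd ((\<lambda>t. Poly_Mapping.lookup h t) ` Poly_Mapping.keys h)"
  have prim_f: "prim f = Poly_Mapping.map (\<lambda>a. a div c) h"
    unfolding prim_def Let_def h_def c_def ..
  have lookup_h: "rat_of_int (Poly_Mapping.lookup h t) = Poly_Mapping.lookup f t * rat_of_int (den f)" for t
    using lookup_times_den_integral[of f t]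
    by (cases "Poly_Mapping.lookup f t = 0") (auto simp: h_def map.rep_eq when_def)
  have c_dvd: "c dvd Poly_Mapping.lookup h t" for t
    unfolding c_def by (cases "t \<in> Poly_Mapping.keys h") (auto simp: in_keys_iff)
  obtain t0 where "t0 \<in> Poly_Mapping.keys f"
    using assms by (metis keys_eq_empty ex_in_conv)
  then have "Poly_Mapping.lookup h t0 \<noteq> 0"
    using lookup_h[of t0] den_nonzero[of f] by (auto simp: in_keys_iff)
  then have "c \<noteq> 0"
    unfolding c_def by (simp add: image_subset_iff in_keys_iff) blast
  have "to_rat_poly (prim f) = Poly_Mapping.single 0 (rat_of_int (den f) / rat_of_int c) * f"
  proof (rule poly_mapping_eqI)
    fix t
    have "Poly_Mapping.lookup (to_rat_poly (prim f)) t = rat_of_int (Poly_Mapping.lookup h t) / rat_of_int c"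
      using c_dvd[of t] by (simp add: prim_f map.rep_eq of_int_div when_def)
    then show "Poly_Mapping.lookup (to_rat_poly (prim f)) t
        = Poly_Mapping.lookup (Poly_Mapping.single 0 (rat_of_int (den f) / rat_of_int c) * f) t"
      by (simp add: lookup_h lookup_single_zero_mult)
  qed
  moreover have "rat_of_int (den f) / rat_of_int c \<noteq> 0"
    using den_nonzero[of f] \<open>c \<noteq> 0\<close> by simp
  ultimately show ?thesis
    by blast
qed

lemma keys_prim:
  assumes "f \<noteq> 0"
  shows "Poly_Mapping.keys (prim f) = Poly_Mapping.keys f"
proof -
  obtain a where "a \<noteq> 0" and prim_f: "to_rat_poly (prim f) = Poly_Mapping.single 0 a * f"
    using to_rat_poly_prim[OF assms] by blast
  have "Poly_Mapping.lookup (prim f) t = 0 \<longleftrightarrow> Poly_Mapping.lookup f t = 0" for t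
  proof -
    have "rat_of_int (Poly_Mapping.lookup (prim f) t) = a * Poly_Mapping.lookup f t"
      using arg_cong[where f="\<lambda>p. Poly_Mapping.lookup p t", OF prim_f] by (simp add: lookup_single_zero_mult)
    then have "Poly_Mapping.lookup (prim f) t = 0 \<longleftrightarrow> a * Poly_Mapping.lookup f t = 0"
      by (metis of_int_eq_0_iff)
    then show ?thesis
      using \<open>a \<noteq> 0\<close> by simp
  qed
  then show ?thesis
    by (simp add: set_eq_iff in_keys_iff)
qed

lemma LT_prim: "f \<noteq> 0 \<Longrightarrow> LT le (prim f) = LT le f"
  unfolding LT_def by (simp add: keys_prim)

lemma prim_nonzero:
  assumes "f \<noteq> 0"
  shows "prim f \<noteq> 0"
proof
  assume "prim f = 0"
  then have "Poly_Mapping.keys f = {}"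
    using keys_prim[OF assms] by simp
  with assms show False
    by simp
qed

lemma to_rat_poly_ideal_gen_prim:
  assumes I: "is_ideal I" and "F \<subseteq> I" "0 \<notin> F" and "h \<in> ideal_gen (prim ` F)"
  shows "to_rat_poly h \<in> I"
proof -
  have K: "is_ideal {h. to_rat_poly h \<in> I}"
    unfolding is_ideal_def
    by (simp add: to_rat_poly_add to_rat_poly_mult is_ideal_zero[OF I] is_ideal_add[OF I] is_ideal_mult[OF I])
  have "prim ` F \<subseteq> {h. to_rat_poly h \<in> I}"
  proof
    fix q assume "q \<in> prim ` F"
    then obtain f where "f \<in> F" "q = prim f"
      by blast
    moreover obtain a where "to_rat_poly (prim f) = Poly_Mapping.single 0 a * f"
      using to_rat_poly_prim \<open>0 \<notin> F\<close> \<open>f \<in> F\<close> by metis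
    ultimately show "q \<in> {h. to_rat_poly h \<in> I}"
      using is_ideal_mult[OF I] \<open>F \<subseteq> I\<close> by auto
  qed
  with \<open>h \<in> ideal_gen (prim ` F)\<close> show ?thesis
    using ideal_gen_least[OF K] by blast
qed

section \<open>p-integral rationals\<close>

text \<open>Membership in the localisation of the integers at p.\<close>
definition p_integral :: "int \<Rightarrow> rat \<Rightarrow> bool" where
  "p_integral p q \<longleftrightarrow> \<not> p dvd snd (quotient_of q)"

lemma p_integral_iff: "p_integral p q \<longleftrightarrow> (\<exists>a b. \<not> p dvd b \<and> q = rat_of_int a / rat_of_int b)"
proof
  assume "p_integral p q"
  then show "\<exists>a b. \<not> p dvd b \<and> q = rat_of_int a / rat_of_int b"
    unfolding p_integral_def by (metis prod.collapse quotient_of_div)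
next
  assume "\<exists>a b. \<not> p dvd b \<and> q = rat_of_int a / rat_of_int b"
  then obtain a b where ab: "\<not> p dvd b" "q = rat_of_int a / rat_of_int b"
    by blast
  obtain n d where nd: "quotient_of q = (n, d)"
    by (cases "quotient_of q")
  have "b \<noteq> 0" "d > 0"
    using ab(1) quotient_of_denom_pos[OF nd] by auto
  then have "a * d = n * b"
    using ab(2) quotient_of_div[OF nd] by (simp add: field_simps flip: of_int_mult of_int_eq_iff)
  then have "d dvd b"
    using quotient_of_coprime[OF nd] by (metis coprime_commute coprime_dvd_mult_right_iff dvd_triv_right)
  then show "p_integral p q"
    unfolding p_integral_def nd using ab(1) dvd_trans by auto
qed

lemma p_integral_of_int: "prime p \<Longrightarrow> p_integral p (rat_of_int a)"
  unfolding p_integral_iff by (rule exI[of _ a], rule exI[of _ 1]) (simp add: prime_int_iff)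

lemma
  assumes "prime p" "p_integral p x" "p_integral p y"
  shows p_integral_diff: "p_integral p (x - y)"
    and p_integral_add: "p_integral p (x + y)"
    and p_integral_mult: "p_integral p (x * y)"
proof -
  obtain a b a' b' where b: "\<not> p dvd b" "\<not> p dvd b'"
    and x: "x = rat_of_int a / rat_of_int b" and y: "y = rat_of_int a' / rat_of_int b'"
    using assms(2,3) unfolding p_integral_iff by blast
  moreover have "\<not> p dvd b * b'" "b \<noteq> 0" "b' \<noteq> 0"
    using b assms(1) by (auto simp: prime_dvd_mult_iff)
  moreover have "x - y = rat_of_int (a * b' - a' * b) / rat_of_int (b * b')"
    "x + y = rat_of_int (a * b' + a' * b) / rat_of_int (b * b')"
    "x * y = rat_of_int (a * a') / rat_of_int (b * b')"
    using calculation unfolding x y by (simp_all add: field_simps)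
  ultimately show "p_integral p (x - y)" "p_integral p (x + y)" "p_integral p (x * y)"
    unfolding p_integral_iff by blast+
qed

lemma p_integral_divide:
  assumes "prime p" "p_integral p x" "\<not> p dvd c"
  shows "p_integral p (x / rat_of_int c)"
proof -
  obtain a b where "\<not> p dvd b" "x = rat_of_int a / rat_of_int b"
    using assms(2) unfolding p_integral_iff by blast
  moreover have "\<not> p dvd b * c"
    using calculation assms(1,3) by (simp add: prime_dvd_mult_iff)
  ultimately show ?thesis
    unfolding p_integral_iff by (intro exI[of _ a] exI[of _ "b * c"]) simp
qed

lemma not_dvd_den_iff_p_integral:
  assumes "prime p"
  shows "\<not> p dvd den f \<longleftrightarrow> (\<forall>t. p_integral p (Poly_Mapping.lookup f t))"
proof
  assume "\<not> p dvd den f"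
  show "\<forall>t. p_integral p (Poly_Mapping.lookup f t)"
  proof
    fix t
    show "p_integral p (Poly_Mapping.lookup f t)"
    proof (cases "t \<in> Poly_Mapping.keys f")
      case True
      then have "snd (quotient_of (Poly_Mapping.lookup f t)) dvd den f"
        unfolding den_def by (intro dvd_Lcm) blast
      then show ?thesis
        using \<open>\<not> p dvd den f\<close> dvd_trans unfolding p_integral_def by blast
    qed (use p_integral_of_int[OF assms, of 0] in \<open>simp add: in_keys_iff\<close>)
  qed
next
  assume "\<forall>t. p_integral p (Poly_Mapping.lookup f t)"
  define D where "D = (\<lambda>t. snd (quotient_of (Poly_Mapping.lookup f t))) ` Poly_Mapping.keys f"
  have "den f dvd \<Prod>D"
    unfolding den_def D_def[symmetric] by (rule Lcm_least, rule dvd_prod_eqI) (auto simp: D_def)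
  moreover have "\<not> p dvd \<Prod>D"
    using \<open>\<forall>t. p_integral p (Poly_Mapping.lookup f t)\<close> assms
    by (auto simp: D_def prime_dvd_prod_iff p_integral_def)
  ultimately show "\<not> p dvd den f"
    using dvd_trans by blast
qed

section \<open>Denominators of a reduced basis\<close>

text \<open>The elements of a reduced basis preceding g i are monic with p-integral coefficients,
  so dividing by them keeps p-integrality; the remainder is then also irreducible by the later
  elements, whose leading terms are not below that of g i.\<close>
lemma p_integral_remainder:
  fixes g :: "nat \<Rightarrow> ('v::finite, rat) mpoly" and f :: "('v, rat) mpoly"
  assumes le: "term_order le" and G: "is_reduced_GB le (g ` {1..r}) I" and i: "i \<in> {1..r}"
    and sorted: "\<And>j. j \<in> {1..r} \<Longrightarrow> i \<le> j \<Longrightarrow> le (LT le (g i)) (LT le (g j))"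
    and p: "prime p" and den: "\<forall>j\<in>{1..<i}. \<not> p dvd den (g j)"
    and f_coeffs: "\<forall>t. p_integral p (Poly_Mapping.lookup f t)"
    and f_below: "\<forall>s\<in>Poly_Mapping.keys f. le s (LT le (g i)) \<and> s \<noteq> LT le (g i)"
  shows "\<exists>\<rho>. f - \<rho> \<in> I \<and> (\<forall>t. p_integral p (Poly_Mapping.lookup \<rho> t)) \<and>
    (\<forall>s\<in>Poly_Mapping.keys \<rho>. le s (LT le (g i)) \<and> s \<noteq> LT le (g i) \<and>
      (\<forall>k\<in>{1..r}. \<not> pp_dvd (LT le (g k)) s))"
proof -
  define T where "T = LT le (g i)"
  have GB: "is_GB le (g ` {1..r}) I"
    by (rule is_minimal_GB_GB[OF is_reduced_GB_minimal[OF G]])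
  have earlier: "g ` {1..<i} \<subseteq> g ` {1..r}"
    using i by auto
  have "\<exists>\<rho>. f - \<rho> \<in> ideal_gen (g ` {1..<i}) \<and> (\<forall>t. Poly_Mapping.lookup \<rho> t \<in> {q. p_integral p q}) \<and>
    (\<forall>s\<in>Poly_Mapping.keys \<rho>. (\<exists>t\<in>Poly_Mapping.keys f. le s t) \<and> (\<forall>q\<in>g ` {1..<i}. \<not> pp_dvd (LT le q) s))"
  proof (rule division_with_coefficients_in[OF le])
    show "0 \<notin> g ` {1..<i}"
      using is_GB_zero_notin[OF GB] earlier by blast
    show "Poly_Mapping.lookup q t \<in> {q. p_integral p q}" if "q \<in> g ` {1..<i}" for q t
      using that den not_dvd_den_iff_p_integral[OF p] by auto
    show "inverse (LC le q) \<in> {q. p_integral p q}" if "q \<in> g ` {1..<i}" for q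
      using that earlier is_reduced_GB_LC[OF G] p_integral_of_int[OF p, of 1] by auto
  qed (use p_integral_of_int[OF p, of 0] p_integral_diff[OF p] p_integral_mult[OF p] f_coeffs in auto)
  then obtain \<rho> where \<rho>: "f - \<rho> \<in> ideal_gen (g ` {1..<i})" "\<forall>t. p_integral p (Poly_Mapping.lookup \<rho> t)"
    "\<forall>s\<in>Poly_Mapping.keys \<rho>. (\<exists>t\<in>Poly_Mapping.keys f. le s t) \<and> (\<forall>q\<in>g ` {1..<i}. \<not> pp_dvd (LT le q) s)"
    by auto
  have "ideal_gen (g ` {1..<i}) \<subseteq> I"
    using is_GB_subset[OF GB] earlier by (intro ideal_gen_least[OF is_GB_ideal[OF GB]]) blast
  moreover have "le s T \<and> s \<noteq> T \<and> (\<forall>k\<in>{1..r}. \<not> pp_dvd (LT le (g k)) s)"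
    if "s \<in> Poly_Mapping.keys \<rho>" for s
  proof -
    have s: "(\<exists>t\<in>Poly_Mapping.keys f. le s t) \<and> (\<forall>q\<in>g ` {1..<i}. \<not> pp_dvd (LT le q) s)"
      using \<rho>(3) that by (rule bspec)
    then obtain t where t: "t \<in> Poly_Mapping.keys f" "le s t"
      by blast
    then have "le s T" "s \<noteq> T"
      using term_order_le_less_trans[OF le t(2)] f_below unfolding T_def by blast+
    have "\<not> pp_dvd (LT le (g k)) s" if k: "k \<in> {1..r}" for k
    proof (cases "k < i")
      case True
      then have "g k \<in> g ` {1..<i}"
        using k by simp
      with conjunct2[OF s] show ?thesis
        by (rule bspec)
    next
      case False
      then have "le T (LT le (g k))"
        using sorted[OF k] unfolding T_def by simp
      then show ?thesis
        using not_pp_dvd_below[OF le _ \<open>le s T\<close> \<open>s \<noteq> T\<close>] by blast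
    qed
    with \<open>le s T\<close> \<open>s \<noteq> T\<close> show ?thesis
      by blast
  qed
  ultimately show ?thesis
    using \<rho>(1,2) unfolding T_def by blast
qed

lemma p_integral_LC_times_reduced_GB_element:
  fixes g :: "nat \<Rightarrow> ('v::finite, rat) mpoly" and h :: "('v, int) mpoly"
  assumes le: "term_order le" and G: "is_reduced_GB le (g ` {1..r}) I" and i: "i \<in> {1..r}"
    and sorted: "\<And>j. j \<in> {1..r} \<Longrightarrow> i \<le> j \<Longrightarrow> le (LT le (g i)) (LT le (g j))"
    and p: "prime p" and den: "\<forall>j\<in>{1..<i}. \<not> p dvd den (g j)"
    and h: "to_rat_poly h \<in> I" "LT le h = LT le (g i)"
  shows "p_integral p (rat_of_int (LC le h) * Poly_Mapping.lookup (g i) t)"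
proof -
  define T where "T = LT le (g i)"
  define c where "c = rat_of_int (LC le h)"
  define tail where "tail = to_rat_poly (h - Poly_Mapping.single (LT le h) (LC le h))"
  have "\<forall>t. p_integral p (Poly_Mapping.lookup tail t)"
    by (simp add: tail_def p_integral_of_int[OF p])
  moreover have "\<forall>s\<in>Poly_Mapping.keys tail. le s T \<and> s \<noteq> T"
    unfolding tail_def T_def h(2)[symmetric] using keys_tail_below[OF le, where f=h] by simp
  ultimately obtain \<rho> where \<rho>: "tail - \<rho> \<in> I" "\<forall>t. p_integral p (Poly_Mapping.lookup \<rho> t)"
    "\<forall>s\<in>Poly_Mapping.keys \<rho>. le s T \<and> s \<noteq> T \<and> (\<forall>k\<in>{1..r}. \<not> pp_dvd (LT le (g k)) s)"
    using p_integral_remainder[OF le G i sorted p den, of tail] unfolding T_def by blast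
  define R where "R = Poly_Mapping.single T c + \<rho>"
  have "R = to_rat_poly h - (tail - \<rho>)"
    by (rule poly_mapping_eqI)
      (simp add: R_def tail_def c_def T_def h(2) lookup_add lookup_minus lookup_single when_def)
  then have "R \<in> I"
    using is_ideal_diff[OF is_GB_ideal[OF is_minimal_GB_GB[OF is_reduced_GB_minimal[OF G]]] h(1) \<rho>(1)]
    by simp
  moreover have "\<forall>s\<in>Poly_Mapping.keys R. s \<noteq> T \<longrightarrow> (\<forall>q\<in>g ` {1..r}. \<not> pp_dvd (LT le q) s)"
  proof (intro ballI impI)
    fix s q assume "s \<in> Poly_Mapping.keys R" "s \<noteq> T" "q \<in> g ` {1..r}"
    then have "s \<in> Poly_Mapping.keys \<rho>"
      by (auto simp: R_def in_keys_iff lookup_add lookup_single)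
    then show "\<not> pp_dvd (LT le q) s"
      using \<rho>(3) \<open>q \<in> g ` {1..r}\<close> by auto
  qed
  ultimately have "R = Poly_Mapping.single 0 (Poly_Mapping.lookup R T) * g i"
    using reduced_GB_irreducible_imp_multiple[OF le G _ \<open>R \<in> I\<close>] i unfolding T_def by blast
  moreover have "Poly_Mapping.lookup R T = c"
    using \<rho>(3) by (auto simp: R_def lookup_add in_keys_iff)
  ultimately have "c * Poly_Mapping.lookup (g i) t = Poly_Mapping.lookup R t"
    by (metis lookup_single_zero_mult)
  moreover have "p_integral p (Poly_Mapping.lookup R t)"
    using \<rho>(2) p_integral_of_int[OF p] p_integral_add[OF p]
    by (simp add: R_def c_def lookup_add lookup_single when_def)
  ultimately show ?thesis
    unfolding c_def by simp
qed

lemma prime_dvd_LC_if_prime_dvd_den: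
  fixes g :: "nat \<Rightarrow> ('v::finite, rat) mpoly" and h :: "('v, int) mpoly"
  assumes le: "term_order le" and G: "is_reduced_GB le (g ` {1..r}) I" and i: "i \<in> {1..r}"
    and sorted: "\<And>j. j \<in> {1..r} \<Longrightarrow> i \<le> j \<Longrightarrow> le (LT le (g i)) (LT le (g j))"
    and p: "prime p" "p dvd den (g i)" and den: "\<forall>j\<in>{1..<i}. \<not> p dvd den (g j)"
    and h: "to_rat_poly h \<in> I" "LT le h = LT le (g i)"
  shows "p dvd LC le h"
proof (rule ccontr)
  assume "\<not> p dvd LC le h"
  have "p_integral p (Poly_Mapping.lookup (g i) t)" for t
    using p_integral_divide[OF p(1) p_integral_LC_times_reduced_GB_element[OF le G i sorted p(1) den h]
        \<open>\<not> p dvd LC le h\<close>] \<open>\<not> p dvd LC le h\<close> by (cases "LC le h = 0") auto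
  then have "\<not> p dvd den (g i)"
    using not_dvd_den_iff_p_integral[OF p(1)] by blast
  then show False
    using p(2) by contradiction
qed

section \<open>Indexing the strong basis\<close>

lemma extend_to_bij_betw_atLeastAtMost:
  fixes f :: "nat \<Rightarrow> 'a"
  assumes "finite B" "inj_on f {1..r}" "f ` {1..r} \<subseteq> B"
  shows "\<exists>s h. r \<le> s \<and> bij_betw h {1..s} B \<and> (\<forall>i\<in>{1..r}. h i = f i)"
proof -
  define R where "R = B - f ` {1..r}"
  obtain e where e: "bij_betw e {1..card R} R"
    using ex_bij_betw_nat_finite_1[of R] \<open>finite B\<close> unfolding R_def by blast
  define h where "h i = (if i \<le> r then f i else e (i - r))" for i
  have "bij_betw h {1..r} (f ` {1..r}) \<longleftrightarrow> bij_betw f {1..r} (f ` {1..r})"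
    by (rule bij_betw_cong) (simp add: h_def)
  then have "bij_betw h {1..r} (f ` {1..r})"
    using inj_on_imp_bij_betw[OF \<open>inj_on f {1..r}\<close>] by simp
  moreover have "bij_betw (\<lambda>i. i - r) {r + 1..r + card R} {1..card R}"
    by (rule bij_betw_byWitness[where f'="\<lambda>j. j + r"]) auto
  then have "bij_betw (e \<circ> (\<lambda>i. i - r)) {r + 1..r + card R} R"
    using e by (rule bij_betw_trans)
  moreover have "bij_betw h {r + 1..r + card R} R \<longleftrightarrow> bij_betw (e \<circ> (\<lambda>i. i - r)) {r + 1..r + card R} R"
    by (rule bij_betw_cong) (simp add: h_def)
  moreover have "f ` {1..r} \<inter> R = {}"
    unfolding R_def by blast
  ultimately have "bij_betw h ({1..r} \<union> {r + 1..r + card R}) (f ` {1..r} \<union> R)"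
    using bij_betw_combine by blast
  moreover have "{1..r} \<union> {r + 1..r + card R} = {1..r + card R}" "f ` {1..r} \<union> R = B"
    using \<open>f ` {1..r} \<subseteq> B\<close> unfolding R_def by auto
  moreover have "\<forall>i\<in>{1..r}. h i = f i"
    by (simp add: h_def)
  ultimately show ?thesis
    by (intro exI[of _ "r + card R"] exI[of _ h]) simp
qed

lemma to_rat_poly_strong_GB_prim_subset:
  assumes G: "is_GB le G I" and Gt: "is_minimal_strong_GB le Gt (ideal_gen (prim ` G))"
  shows "to_rat_poly ` Gt \<subseteq> I"
proof clarify
  fix h assume "h \<in> Gt"
  then have "h \<in> ideal_gen (prim ` G)"
    using in_ideal_gen[of h Gt] by (simp add: is_minimal_strong_GB_ideal_gen[OF Gt])
  then show "to_rat_poly h \<in> I"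
    by (rule to_rat_poly_ideal_gen_prim[OF is_GB_ideal[OF G] is_GB_subset[OF G] is_GB_zero_notin[OF G]])
qed

lemma minimal_strong_GB_element_with_LT:
  fixes G :: "('v::finite, rat) mpoly set" and Gt :: "('v, int) mpoly set"
  assumes le: "term_order le" and G: "is_minimal_GB le G I" and Gt: "is_minimal_strong_GB le Gt J"
    and Gt_I: "to_rat_poly ` Gt \<subseteq> I" and "q \<in> J" "q \<noteq> 0" "g \<in> G" "LT le q = LT le g"
  shows "\<exists>h\<in>Gt. LT le h = LT le g \<and> LC le h dvd LC le q"
proof -
  obtain h where "h \<in> Gt" "LM le h dvd LM le q"
    using is_minimal_strong_GB_LM_dvd[OF Gt \<open>q \<in> J\<close> \<open>q \<noteq> 0\<close>] by blast
  then have dvd: "pp_dvd (LT le h) (LT le q)" "LC le h dvd LC le q"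
    using LM_dvd_iff[OF le \<open>q \<noteq> 0\<close>] by blast+
  have "to_rat_poly h \<in> I" "to_rat_poly h \<noteq> 0"
    using Gt_I \<open>h \<in> Gt\<close> is_minimal_strong_GB_zero_notin[OF Gt] by auto
  then have "LT le h = LT le g"
    using minimal_GB_LT_dvd_imp_eq[OF le G \<open>g \<in> G\<close>, of "to_rat_poly h"] dvd(1) \<open>LT le q = LT le g\<close>
    by simp
  with \<open>h \<in> Gt\<close> dvd(2) show ?thesis
    by blast
qed

lemma minimal_strong_GB_LT_proper_multiple:
  fixes G :: "('v::finite, rat) mpoly set" and Gt :: "('v, int) mpoly set"
  assumes G: "is_GB le G I" and Gt: "is_minimal_strong_GB le Gt J" and Gt_I: "to_rat_poly ` Gt \<subseteq> I"
    and "h \<in> Gt" and new: "\<forall>g\<in>G. LT le h \<noteq> LT le g"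
  shows "\<exists>g\<in>G. pp_proper_multiple (LT le h) (LT le g)"
proof -
  have "to_rat_poly h \<in> I" "to_rat_poly h \<noteq> 0"
    using Gt_I \<open>h \<in> Gt\<close> is_minimal_strong_GB_zero_notin[OF Gt] by auto
  then obtain g u where "g \<in> G" "LT le h = LT le g + u"
    using is_GB_LT_dvd[OF G] unfolding pp_dvd_def by fastforce
  moreover have "u \<noteq> 0"
    using calculation new by auto
  ultimately show ?thesis
    unfolding pp_proper_multiple_def by blast
qed

lemma strong_GB_indexing:
  fixes g :: "nat \<Rightarrow> ('v::finite, rat) mpoly" and Gt :: "('v, int) mpoly set"
  assumes le: "term_order le" and G: "is_minimal_GB le (g ` {1..r}) I"
    and LT_inj: "inj_on (\<lambda>i. LT le (g i)) {1..r}"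
    and Gt: "is_minimal_strong_GB le Gt (ideal_gen (prim ` g ` {1..r}))"
  shows "\<exists>s gt. r \<le> s \<and> bij_betw gt {1..s} Gt \<and>
    (\<forall>i\<in>{1..r}. LT le (gt i) = LT le (g i) \<and> LC le (gt i) dvd LC le (prim (g i)))"
proof -
  have GB: "is_GB le (g ` {1..r}) I"
    by (rule is_minimal_GB_GB[OF G])
  have "\<exists>h\<in>Gt. LT le h = LT le (g k) \<and> LC le h dvd LC le (prim (g k))" if k: "k \<in> {1..r}" for k
  proof (rule minimal_strong_GB_element_with_LT[OF le G Gt])
    show "to_rat_poly ` Gt \<subseteq> I"
      by (rule to_rat_poly_strong_GB_prim_subset[OF GB Gt])
    have "g k \<noteq> 0"
      using is_GB_zero_notin[OF GB] k by auto
    then show "prim (g k) \<noteq> 0" "LT le (prim (g k)) = LT le (g k)"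
      by (simp_all add: prim_nonzero LT_prim)
  qed (use k in \<open>auto intro: in_ideal_gen\<close>)
  then obtain gt where gt: "\<forall>k\<in>{1..r}. gt k \<in> Gt \<and> LT le (gt k) = LT le (g k) \<and> LC le (gt k) dvd LC le (prim (g k))"
    by metis
  have "inj_on gt {1..r}"
    using LT_inj gt unfolding inj_on_def by metis
  then obtain s gt' where "r \<le> s" "bij_betw gt' {1..s} Gt" "\<forall>i\<in>{1..r}. gt' i = gt i"
    using extend_to_bij_betw_atLeastAtMost[OF is_minimal_strong_GB_finite[OF Gt]] gt by blast
  with gt show ?thesis
    by (intro exI[of _ s] exI[of _ gt'] conjI) auto
qed

lemma minimal_strong_GB_extra_element_proper_multiple:
  fixes g :: "nat \<Rightarrow> ('v::finite, rat) mpoly" and gt :: "nat \<Rightarrow> ('v, int) mpoly"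
  assumes le: "term_order le" and G: "is_GB le (g ` {1..r}) I" and Gt: "is_minimal_strong_GB le Gt J"
    and Gt_I: "to_rat_poly ` Gt \<subseteq> I" and bij: "bij_betw gt {1..s} Gt"
    and gt: "\<forall>k\<in>{1..r}. LT le (gt k) = LT le (g k)" and i: "i \<in> {r+1..s}"
  shows "\<exists>k\<in>{1..r}. pp_proper_multiple (LT le (gt i)) (LT le (g k))"
proof -
  have gt_in: "gt j \<in> Gt" if "j \<in> {1..s}" for j
    using bij_betwE[OF bij] that by blast
  have "LT le (gt i) \<noteq> LT le (g k)" if k: "k \<in> {1..r}" for k
  proof
    assume "LT le (gt i) = LT le (g k)"
    then have "LT le (gt i) = LT le (gt k)"
      using gt k by simp
    moreover have "gt i \<in> Gt" "gt k \<in> Gt"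
      using gt_in i k by auto
    ultimately have "gt i = gt k"
      using inj_onD[OF minimal_strong_GB_inj_on_LT[OF le Gt]] by blast
    then have "i = k"
      using inj_onD[OF bij_betw_imp_inj_on[OF bij]] i k by auto
    with i k show False
      by simp
  qed
  then show ?thesis
    using minimal_strong_GB_LT_proper_multiple[OF G Gt Gt_I gt_in] i by auto
qed

lemma minimal_GB_from_minimal_strong_GB:
  fixes g :: "nat \<Rightarrow> ('v::finite, rat) mpoly" and gt :: "nat \<Rightarrow> ('v, int) mpoly"
  assumes le: "term_order le" and G: "is_minimal_GB le (g ` {1..r}) I"
    and Gt: "is_minimal_strong_GB le Gt J" and Gt_I: "to_rat_poly ` Gt \<subseteq> I"
    and gt: "\<forall>i\<in>{1..r}. gt i \<in> Gt \<and> LT le (gt i) = LT le (g i)"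
  shows "is_minimal_GB le (to_rat_poly ` gt ` {1..r}) I"
proof (rule minimal_GB_same_leading_terms[OF le G])
  show "to_rat_poly ` gt ` {1..r} \<subseteq> I"
    using Gt_I gt by auto
  show "0 \<notin> to_rat_poly ` gt ` {1..r}"
    using is_minimal_strong_GB_zero_notin[OF Gt] gt by auto
  have "(\<lambda>i. LT le (gt i)) ` {1..r} = (\<lambda>i. LT le (g i)) ` {1..r}"
    using gt by (intro image_cong) auto
  then show "LT le ` to_rat_poly ` gt ` {1..r} = LT le ` g ` {1..r}"
    by (simp add: image_image)
  show "inj_on (LT le) (to_rat_poly ` gt ` {1..r})"
  proof (rule inj_onI)
    fix x y assume "x \<in> to_rat_poly ` gt ` {1..r}" "y \<in> to_rat_poly ` gt ` {1..r}" "LT le x = LT le y"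
    then obtain a b where ab: "a \<in> {1..r}" "b \<in> {1..r}" "x = to_rat_poly (gt a)" "y = to_rat_poly (gt b)"
      and "LT le (gt a) = LT le (gt b)"
      by auto
    moreover have "gt a \<in> Gt" "gt b \<in> Gt"
      using gt ab by auto
    ultimately have "gt a = gt b"
      using inj_onD[OF minimal_strong_GB_inj_on_LT[OF le Gt]] by blast
    with ab show "x = y"
      by simp
  qed
qed simp

theorem theorem3p7:
  fixes le :: "('v::finite) pp \<Rightarrow> 'v pp \<Rightarrow> bool"
    and I :: "('v, rat) mpoly set"
    and g :: "nat \<Rightarrow> ('v, rat) mpoly"
    and r :: nat
    and Gt :: "('v, int) mpoly set"
  assumes sigma: "term_order le"
    and I_ideal: "is_ideal I"
    and I_nonzero: "I \<noteq> {0}"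
    and G_red: "is_reduced_GB le (g ` {1..r}) I"
    and G_sorted: "\<And>i j. 1 \<le> i \<Longrightarrow> i < j \<Longrightarrow> j \<le> r \<Longrightarrow>
                      LT le (g i) \<noteq> LT le (g j) \<and> le (LT le (g i)) (LT le (g j))"
    and Gt_min: "is_minimal_strong_GB le Gt (ideal_gen (prim ` g ` {1..r}))"
  shows "\<exists>s gt. r \<le> s \<and> bij_betw gt {1..s} Gt \<and>
     \<comment> \<open>(a)\<close>
     (\<forall>i\<in>{1..r}. LT le (gt i) = LT le (g i)) \<and>
     (\<forall>i\<in>{r+1..s}. \<exists>k\<in>{1..r}. pp_proper_multiple (LT le (gt i)) (LT le (g k))) \<and>
     \<comment> \<open>(b)\<close>
     is_minimal_GB le (to_rat_poly ` gt ` {1..r}) I \<and>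
     \<comment> \<open>(c)\<close>
     (\<forall>i\<in>{1..r}. LC le (gt i) dvd LC le (prim (g i))) \<and>
     \<comment> \<open>(d)\<close>
     (\<forall>i\<in>{1..r}. \<forall>p::int. prime p \<and> p dvd den (g i) \<and> (\<forall>j\<in>{1..<i}. \<not> p dvd den (g j))
         \<longrightarrow> p dvd LC le (gt i))"
proof -
  note G_min = is_reduced_GB_minimal[OF G_red]
  note GB = is_minimal_GB_GB[OF G_min]
  have Gt_I: "to_rat_poly ` Gt \<subseteq> I"
    by (rule to_rat_poly_strong_GB_prim_subset[OF GB Gt_min])
  have sorted: "\<And>i j. i \<in> {1..r} \<Longrightarrow> j \<in> {1..r} \<Longrightarrow> i \<le> j \<Longrightarrow> le (LT le (g i)) (LT le (g j))"
    using G_sorted term_order_refl[OF sigma] by (metis atLeastAtMost_iff le_neq_implies_less)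
  have "inj_on (\<lambda>i. LT le (g i)) {1..r}"
    using G_sorted by (intro linorder_inj_onI) auto
  then obtain s gt where s: "r \<le> s" "bij_betw gt {1..s} Gt"
    and gt: "\<forall>i\<in>{1..r}. LT le (gt i) = LT le (g i) \<and> LC le (gt i) dvd LC le (prim (g i))"
    using strong_GB_indexing[OF sigma G_min _ Gt_min] by blast
  have gt_in: "gt i \<in> Gt" if "i \<in> {1..r}" for i
    using bij_betwE[OF s(2)] that s(1) by auto
  have "\<exists>k\<in>{1..r}. pp_proper_multiple (LT le (gt i)) (LT le (g k))" if "i \<in> {r+1..s}" for i
    using minimal_strong_GB_extra_element_proper_multiple[OF sigma GB Gt_min Gt_I s(2) _ that] gt by blast
  moreover have "is_minimal_GB le (to_rat_poly ` gt ` {1..r}) I"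
    using minimal_GB_from_minimal_strong_GB[OF sigma G_min Gt_min Gt_I] gt gt_in by blast
  moreover have "p dvd LC le (gt i)"
    if "i \<in> {1..r}" "prime p" "p dvd den (g i)" "\<forall>j\<in>{1..<i}. \<not> p dvd den (g j)" for i p
  proof (rule prime_dvd_LC_if_prime_dvd_den[OF sigma G_red that(1) sorted[OF that(1)] that(2-4)])
    show "to_rat_poly (gt i) \<in> I" "LT le (gt i) = LT le (g i)"
      using Gt_I gt_in gt that(1) by auto
  qed
  ultimately show ?thesis
    using s gt by blast
qed

end
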